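(* Let $K\in\mathbb{N}$, $f_1,\dots,f_K\in\mathcal{S}'(\mathbb{Z}^{d})$, and let $\langle f_1,\dots,f_K\rangle$ be the ideal of $\mathcal{S}'(\mathbb{Z}^{d})$ they generate. Then $f\in\mathcal{S}'(\mathbb{Z}^{d})$ belongs to $\langle f_1,\dots,f_K\rangle$ if and only if there exist a real $M>0$ and a nonnegative integer $m$ such that $$|f(\mathbf{n})|\leq M(1+\|\mathbf{n}\|)^m\sum_{k=1}^K|f_k(\mathbf{n})|\quad\text{for all }\mathbf{n}\in\mathbb{Z}^d.$$
   Context: For $\mathbf{n}=(n_1,\dots,n_d)\in\mathbb{Z}^d$ write $\|\mathbf{n}\|:=|n_1|+\cdots+|n_d|$. $\mathcal{S}'(\mathbb{Z}^{d})$ denotes the set of all maps $f:\mathbb{Z}^d\to\mathbb{C}$ of at most polynomial growth, i.e. for which there exist a real $M>0$ and an integer $m\geq 0$ with $|f(\mathbf{n})|\leq M(1+\|\mathbf{n}\|)^m$ for all $\mathbf{n}\in\mathbb{Z}^d$. It is a commutative unital ring under pointwise addition and multiplication, with unit the constant function $1$. *)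

theory Defs
  imports "HOL-Analysis.Analysis"
begin

text \<open>Lattice points of Z^d are modelled as functions from a finite index type 'd to int.\<close>

definition l1norm :: "('d::finite \<Rightarrow> int) \<Rightarrow> real" where
  "l1norm n = (\<Sum>i\<in>UNIV. real_of_int \<bar>n i\<bar>)"

definition Sprime :: "(('d::finite \<Rightarrow> int) \<Rightarrow> complex) set" where
  "Sprime = {f. \<exists>M::real. \<exists>m::nat. M > 0 \<and>
      (\<forall>n. cmod (f n) \<le> M * (1 + l1norm n) ^ m)}"

definition gen_ideal :: "nat \<Rightarrow> (nat \<Rightarrow> ('d::finite \<Rightarrow> int) \<Rightarrow> complex)
      \<Rightarrow> (('d \<Rightarrow> int) \<Rightarrow> complex) set" where
  "gen_ideal K fs = {f. \<exists>g. (\<forall>k\<in>{1..K}. g k \<in> Sprime) \<and>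
      f = (\<lambda>n. \<Sum>k=1..K. g k n * fs k n)}"

end

theory Submission
  imports Defs
begin

text \<open>Necessity is the triangle inequality, once the finitely many coefficients of a combination
  \<open>\<Sum>k. g\<^sub>k f\<^sub>k\<close> are bounded by one common polynomial weight. For sufficiency take
  \<open>g\<^sub>k = f \<cdot> conj f\<^sub>k / (\<bar>f\<^sub>k\<bar> \<Sum>\<^sub>j \<bar>f\<^sub>j\<bar>)\<close> (and \<open>g\<^sub>k = 0\<close> where \<open>f\<^sub>k\<close> vanishes): then
  \<open>\<Sum>\<^sub>k g\<^sub>k f\<^sub>k = f\<close> wherever some \<open>f\<^sub>k\<close> is nonzero, the hypothesis forces \<open>f = 0\<close> elsewhere,
  and \<open>\<bar>g\<^sub>k\<bar> \<le> \<bar>f\<bar> / \<Sum>\<^sub>j \<bar>f\<^sub>j\<bar>\<close> is of polynomial growth by the hypothesis.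
  Neither direction uses that \<open>f\<close> and the \<open>f\<^sub>k\<close> themselves lie in \<open>Sprime\<close>.\<close>

lemma l1norm_nonneg: "l1norm n \<ge> 0"
  unfolding l1norm_def by (intro sum_nonneg) auto

lemma polynomial_weight_mono:
  assumes "0 \<le> M" "M \<le> M'" "m \<le> m'"
  shows "M * (1 + l1norm n) ^ m \<le> M' * (1 + l1norm n) ^ m'"
proof -
  have "(1 + l1norm n) ^ m \<le> (1 + l1norm n) ^ m'"
    using l1norm_nonneg[of n] assms(3) by (intro power_increasing) auto
  then show ?thesis
    using assms(1,2) l1norm_nonneg[of n] by (intro mult_mono) auto
qed

lemma Sprime_common_bound:
  assumes "finite I" "\<forall>k\<in>I. g k \<in> Sprime"
  shows "\<exists>M m. M > 0 \<and> (\<forall>k\<in>I. \<forall>n. cmod (g k n) \<le> M * (1 + l1norm n) ^ m)"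
  using assms
proof (induction I rule: finite_induct)
  case empty
  show ?case by (intro exI[of _ 1]) auto
next
  case (insert k I)
  then obtain M m where M: "M > 0" and bound: "\<forall>j\<in>I. \<forall>n. cmod (g j n) \<le> M * (1 + l1norm n) ^ m"
    by auto
  obtain M' m' where M': "M' > 0" and bound': "\<forall>n. cmod (g k n) \<le> M' * (1 + l1norm n) ^ m'"
    using insert.prems unfolding Sprime_def by auto
  have "\<forall>j\<in>insert k I. \<forall>n. cmod (g j n) \<le> (M + M') * (1 + l1norm n) ^ max m m'"
  proof (intro ballI allI)
    fix j n
    assume "j \<in> insert k I"
    then show "cmod (g j n) \<le> (M + M') * (1 + l1norm n) ^ max m m'"
      using bound bound' polynomial_weight_mono[of M "M + M'" m "max m m'" n]
        polynomial_weight_mono[of M' "M + M'" m' "max m m'" n] M M'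
      by (fastforce intro: order_trans)
  qed
  then show ?case
    using M M' by (intro exI[of _ "M + M'"] exI[of _ "max m m'"]) auto
qed

lemma gen_ideal_imp_bound:
  assumes "f \<in> gen_ideal K fs"
  shows "\<exists>M m. M > 0 \<and>
    (\<forall>n. cmod (f n) \<le> M * (1 + l1norm n) ^ m * (\<Sum>k=1..K. cmod (fs k n)))"
proof -
  obtain g where g: "\<forall>k\<in>{1..K}. g k \<in> Sprime" and f: "f = (\<lambda>n. \<Sum>k=1..K. g k n * fs k n)"
    using assms unfolding gen_ideal_def by auto
  obtain M m where M: "M > 0"
    and bound: "\<forall>k\<in>{1..K}. \<forall>n. cmod (g k n) \<le> M * (1 + l1norm n) ^ m"
    using Sprime_common_bound[OF _ g] by auto
  have "cmod (f n) \<le> M * (1 + l1norm n) ^ m * (\<Sum>k=1..K. cmod (fs k n))" for n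
  proof -
    have "cmod (f n) \<le> (\<Sum>k=1..K. cmod (g k n) * cmod (fs k n))"
      unfolding f by (metis (no_types, lifting) norm_mult norm_sum sum.cong)
    also have "\<dots> \<le> (\<Sum>k=1..K. M * (1 + l1norm n) ^ m * cmod (fs k n))"
      using bound by (intro sum_mono mult_right_mono) auto
    finally show ?thesis
      by (simp add: sum_distrib_left)
  qed
  with M show ?thesis by blast
qed

text \<open>The coefficient assigned to \<open>w\<^sub>k\<close> when \<open>z\<close> is written as a combination of the \<open>w\<^sub>j\<close>
  with \<open>S = \<Sum>\<^sub>j \<bar>w\<^sub>j\<bar>\<close>; division by zero makes it \<open>0\<close> when \<open>w\<^sub>k = 0\<close>.\<close>

definition balanced_coeff :: "complex \<Rightarrow> real \<Rightarrow> complex \<Rightarrow> complex" where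
  "balanced_coeff z S w = z * cnj w / complex_of_real (cmod w * S)"

lemma norm_balanced_coeff_le:
  assumes "S \<ge> 0"
  shows "cmod (balanced_coeff z S w) \<le> cmod z / S"
proof (cases "w = 0 \<or> S = 0")
  case True
  then show ?thesis using assms by (auto simp: balanced_coeff_def)
next
  case False
  then show ?thesis using assms by (simp add: balanced_coeff_def norm_divide norm_mult)
qed

lemma balanced_coeff_mult:
  "balanced_coeff z S w * w = z * complex_of_real (cmod w / S)"
proof (cases "w = 0")
  case False
  define r where "r = complex_of_real (cmod w)"
  have "r \<noteq> 0" using False by (simp add: r_def)
  have "cnj w * w = r * r"
    by (metis r_def complex_norm_square mult.commute of_real_power power2_eq_square)
  then have "balanced_coeff z S w * w = z * (r * r) / (r * complex_of_real S)"
    by (simp add: balanced_coeff_def r_def mult.assoc mult.left_commute)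
  also have "\<dots> = z * r / complex_of_real S"
    using \<open>r \<noteq> 0\<close> by (simp add: field_simps)
  finally show ?thesis by (simp add: r_def)
qed (simp add: balanced_coeff_def)

lemma sum_balanced_coeff:
  assumes "finite A" "(\<Sum>j\<in>A. cmod (w j)) \<noteq> 0"
  shows "(\<Sum>k\<in>A. balanced_coeff z (\<Sum>j\<in>A. cmod (w j)) (w k) * w k) = z"
proof -
  define S where "S = (\<Sum>j\<in>A. cmod (w j))"
  have "(\<Sum>k\<in>A. balanced_coeff z S (w k) * w k) = z * complex_of_real (\<Sum>k\<in>A. cmod (w k) / S)"
    by (simp add: balanced_coeff_mult sum_distrib_left)
  also have "(\<Sum>k\<in>A. cmod (w k) / S) = 1"
    using assms(2) by (simp add: S_def sum_divide_distrib[symmetric])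
  finally show ?thesis by (simp add: S_def)
qed

lemma bound_imp_gen_ideal:
  assumes M: "M > 0"
    and bound: "\<forall>n. cmod (f n) \<le> M * (1 + l1norm n) ^ m * (\<Sum>k=1..K. cmod (fs k n))"
  shows "f \<in> gen_ideal K fs"
proof -
  define S where "S n = (\<Sum>k=1..K. cmod (fs k n))" for n
  define g where "g k n = balanced_coeff (f n) (S n) (fs k n)" for k n
  have S_nonneg: "S n \<ge> 0" for n
    unfolding S_def by (intro sum_nonneg) auto
  have "cmod (g k n) \<le> M * (1 + l1norm n) ^ m" for k n
  proof (cases "S n = 0")
    case True
    then show ?thesis
      using M l1norm_nonneg[of n] by (simp add: g_def balanced_coeff_def)
  next
    case False
    have "cmod (g k n) \<le> cmod (f n) / S n"
      unfolding g_def by (rule norm_balanced_coeff_le[OF S_nonneg])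
    also have "\<dots> \<le> M * (1 + l1norm n) ^ m"
      using bound False S_nonneg[of n] by (simp add: S_def divide_le_eq)
    finally show ?thesis .
  qed
  then have "g k \<in> Sprime" for k
    unfolding Sprime_def using M by blast
  moreover have "f n = (\<Sum>k=1..K. g k n * fs k n)" for n
  proof (cases "S n = 0")
    case True
    then have "f n = 0"
      using bound[rule_format, of n] by (simp add: S_def)
    then show ?thesis by (simp add: g_def balanced_coeff_def)
  next
    case False
    then show ?thesis
      using sum_balanced_coeff[of "{1..K}" "\<lambda>k. fs k n" "f n"] by (simp add: g_def S_def)
  qed
  ultimately show ?thesis
    unfolding gen_ideal_def by blast
qed

theorem proposition2p3:
  fixes K :: nat
    and fs :: "nat \<Rightarrow> ('d::finite \<Rightarrow> int) \<Rightarrow> complex"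
    and f :: "('d \<Rightarrow> int) \<Rightarrow> complex"
  assumes "\<forall>k\<in>{1..K}. fs k \<in> Sprime"
    and "f \<in> Sprime"
  shows "f \<in> gen_ideal K fs \<longleftrightarrow>
    (\<exists>M::real. \<exists>m::nat. M > 0 \<and>
      (\<forall>n. cmod (f n) \<le> M * (1 + l1norm n) ^ m * (\<Sum>k=1..K. cmod (fs k n))))"
  using gen_ideal_imp_bound bound_imp_gen_ideal by blast

end
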